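(* Assume $\mu(f)<0$ and (L): for any $\delta,\varepsilon>0$ and compact $K\subset E$ there are $N>0$, $p>0$ such that for all $n\ge N$ and $x\in K$, $\mathbb P^x\{|\frac1{n\delta}\int_0^{n\delta}f(X_s)ds-\mu(f)|>\varepsilon\}\le e^{-pn\delta}$. Then for every $x\in E$ there is $d(x)<0$ such that $$\gamma(x)=\sup_\tau\limsup_{T\to\infty}\mathbb E^x\Big\{\int_0^{\tau\wedge T}\big(f(X_s)-d(x)\big)ds\Big\}<\infty.$$
   Context: $E$ is a locally compact separable metric space in which every closed ball is compact. $(X_t)$ is a right-continuous time-homogeneous (standard) Markov process on $E$ with laws $\mathbb P^x$, expectations $\mathbb E^x$, satisfying the weak Feller property and ergodicity (a unique probability measure $\mu$ with $\|P_t(x,\cdot)-\mu\|_{TV}\to0$ for all $x$); $\mu(f)=\int f\,d\mu$. $f:E\to\mathbb R$ is continuous and bounded. Stopping times may be infinite. *)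

theory Defs
  imports "HOL-Probability.Probability"
begin

text \<open>Total variation distance between two finite measures on the same space
  (sup over measurable sets of the difference; this is half the usual TV norm,
  which does not affect convergence to 0).\<close>
definition tv_dist :: "'a measure \<Rightarrow> 'a measure \<Rightarrow> real" where
  "tv_dist M N = (SUP A \<in> sets M. \<bar>measure M A - measure N A\<bar>)"

definition is_filtration :: "'w measure \<Rightarrow> (real \<Rightarrow> 'w measure) \<Rightarrow> bool" where
  "is_filtration \<Omega> F \<longleftrightarrow>
     (\<forall>t\<ge>0. space (F t) = space \<Omega> \<and> sets (F t) \<subseteq> sets \<Omega>) \<and>
     (\<forall>s t. 0 \<le> s \<longrightarrow> s \<le> t \<longrightarrow> sets (F s) \<subseteq> sets (F t))"

definition stopping_time_on :: "'w measure \<Rightarrow> (real \<Rightarrow> 'w measure) \<Rightarrow> ('w \<Rightarrow> ereal) \<Rightarrow> bool" where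
  "stopping_time_on \<Omega> F \<tau> \<longleftrightarrow>
     (\<forall>\<omega>\<in>space \<Omega>. 0 \<le> \<tau> \<omega>) \<and>
     (\<forall>t\<ge>0. {\<omega>\<in>space \<Omega>. \<tau> \<omega> \<le> ereal t} \<in> sets (F t))"

definition trans_law :: "('a \<Rightarrow> 'w measure) \<Rightarrow> (real \<Rightarrow> 'w \<Rightarrow> 'a::topological_space)
     \<Rightarrow> real \<Rightarrow> 'a \<Rightarrow> 'a measure" where
  "trans_law P X t x = distr (P x) borel (X t)"

definition markov_family ::
  "'w measure \<Rightarrow> (real \<Rightarrow> 'w measure) \<Rightarrow> ('a \<Rightarrow> 'w measure) \<Rightarrow> (real \<Rightarrow> 'w \<Rightarrow> 'a::topological_space) \<Rightarrow> bool" where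
  "markov_family \<Omega> F P X \<longleftrightarrow>
     is_filtration \<Omega> F \<and>
     (\<forall>x. prob_space (P x) \<and> sets (P x) = sets \<Omega>) \<and>
     (\<forall>t\<ge>0. X t \<in> F t \<rightarrow>\<^sub>M borel) \<and>
     (\<forall>\<omega>\<in>space \<Omega>. \<forall>t\<ge>0. continuous (at_right t) (\<lambda>s. X s \<omega>)) \<and>
     (\<forall>x. AE \<omega> in P x. X 0 \<omega> = x) \<and>
     (\<forall>t\<ge>0. \<forall>A\<in>sets borel. (\<lambda>y. measure (P y) {\<omega>\<in>space \<Omega>. X t \<omega> \<in> A}) \<in> borel_measurable borel) \<and>
     (\<forall>x s t A B. 0 \<le> s \<longrightarrow> 0 \<le> t \<longrightarrow> A \<in> sets borel \<longrightarrow> B \<in> sets (F s) \<longrightarrow>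
        measure (P x) ({\<omega>\<in>space \<Omega>. X (s + t) \<omega> \<in> A} \<inter> B) =
        (\<integral>\<omega>. indicator B \<omega> * measure (P (X s \<omega>)) {\<omega>'\<in>space \<Omega>. X t \<omega>' \<in> A} \<partial>P x))"

definition weak_feller :: "('a \<Rightarrow> 'w measure) \<Rightarrow> (real \<Rightarrow> 'w \<Rightarrow> 'a::topological_space) \<Rightarrow> bool" where
  "weak_feller P X \<longleftrightarrow>
     (\<forall>t\<ge>0. \<forall>g::'a \<Rightarrow> real. continuous_on UNIV g \<longrightarrow> bounded (range g) \<longrightarrow>
        continuous_on UNIV (\<lambda>x. \<integral>\<omega>. g (X t \<omega>) \<partial>P x))"

definition ergodic_with :: "('a \<Rightarrow> 'w measure) \<Rightarrow> (real \<Rightarrow> 'w \<Rightarrow> 'a::topological_space) \<Rightarrow> 'a measure \<Rightarrow> bool" where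
  "ergodic_with P X \<mu> \<longleftrightarrow>
     prob_space \<mu> \<and> sets \<mu> = sets borel \<and>
     (\<forall>x. ((\<lambda>t. tv_dist (trans_law P X t x) \<mu>) \<longlongrightarrow> 0) at_top)"

end

theory Submission imports Defs begin

text \<open>Take \<open>d = \<mu>(f)/2\<close> and apply (L) with \<open>\<delta> = 1\<close> and \<open>K = {x}\<close>: for \<open>n \<ge> N\<close> the event
  \<open>E n\<close> that the integral of \<open>f(X)\<close> over \<open>[0, n]\<close> exceeds \<open>d n\<close> has probability at most
  \<open>exp (-p n)\<close>. Off \<open>E n\<close> the integral of \<open>f(X) - d\<close> over \<open>[0, n]\<close> is nonpositive, and it is always
  at most \<open>B n\<close> with \<open>B = sup \<bar>f\<bar> + \<bar>d\<bar>\<close>; the fractional part of \<open>t\<close> adds at most \<open>B\<close>. Hence the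
  integrals of \<open>f(X) - d\<close> over \<open>[0, t]\<close>, \<open>t \<ge> 0\<close>, are dominated uniformly in \<open>t\<close> by
  \<open>B (N + 1) + \<Sum>n. B n 1\<^bsub>E n\<^esub>\<close>, which has finite expectation since \<open>\<Sum>n. n exp (-p n) < \<infinity>\<close>.
  Evaluating at \<open>t = min \<tau> T\<close> bounds \<open>\<gamma>(x)\<close>.\<close>

lemma markov_family_measurable_state:
  assumes "markov_family \<Omega> F P X" "0 \<le> t"
  shows "X t \<in> \<Omega> \<rightarrow>\<^sub>M borel"
proof -
  from assms have "X t \<in> F t \<rightarrow>\<^sub>M borel" "space (F t) = space \<Omega>" "sets (F t) \<subseteq> sets \<Omega>"
    unfolding markov_family_def is_filtration_def by auto
  then show ?thesis
    unfolding measurable_def by auto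
qed

lemma ceiling_grid_bounds:
  fixes s :: real
  shows "s \<le> \<lceil>real (Suc k) * s\<rceil> / real (Suc k)"
    and "\<lceil>real (Suc k) * s\<rceil> / real (Suc k) \<le> s + 1 / real (Suc k)"
proof -
  have "real (Suc k) * s \<le> \<lceil>real (Suc k) * s\<rceil>" "\<lceil>real (Suc k) * s\<rceil> \<le> real (Suc k) * s + 1"
    by linarith+
  then show "s \<le> \<lceil>real (Suc k) * s\<rceil> / real (Suc k)"
    and "\<lceil>real (Suc k) * s\<rceil> / real (Suc k) \<le> s + 1 / real (Suc k)"
    by (simp_all add: field_simps del: of_nat_Suc)
qed

lemma tendsto_ceiling_grid:
  fixes s :: real
  shows "(\<lambda>k. \<lceil>real (Suc k) * s\<rceil> / real (Suc k)) \<longlonglongrightarrow> s"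
proof (rule real_tendsto_sandwich[of "\<lambda>_. s" _ _ "\<lambda>k. s + 1 / real (Suc k)"])
  have "(\<lambda>k. 1 / real (Suc k)) \<longlonglongrightarrow> 0"
    using LIMSEQ_inverse_real_of_nat by (simp add: inverse_eq_divide)
  then show "(\<lambda>k. s + 1 / real (Suc k)) \<longlonglongrightarrow> s"
    using tendsto_add[of "\<lambda>_. s" s] by force
qed (use ceiling_grid_bounds in auto)

text \<open>Paths are only right-continuous on \<open>[0, \<infinity>)\<close>, hence the extension \<open>X (max 0 s)\<close> to all of
  \<open>\<real>\<close>. Right-continuity makes it the pointwise limit of the process sampled on the grids
  \<open>\<int>/(k+1)\<close>, rounded upwards, which gives joint measurability in \<open>(\<omega>, s)\<close>.\<close>
lemma markov_family_measurable_paths: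
  fixes X :: "real \<Rightarrow> 'w \<Rightarrow> 'a::metric_space"
  assumes markov: "markov_family \<Omega> F P X"
  shows "(\<lambda>(\<omega>, s). X (max 0 s) \<omega>) \<in> \<Omega> \<Otimes>\<^sub>M (lborel :: real measure) \<rightarrow>\<^sub>M borel"
proof (rule borel_measurable_LIMSEQ_metric)
  define q where "q k s = max 0 (\<lceil>real (Suc k) * s\<rceil> / real (Suc k))" for k :: nat and s :: real
  show "(\<lambda>(\<omega>, s). X (q k s) \<omega>) \<in> borel_measurable (\<Omega> \<Otimes>\<^sub>M lborel)" for k
  proof -
    have "(\<lambda>(\<omega>, s). X (max 0 (of_int i / real (Suc k))) \<omega>) \<in> borel_measurable (\<Omega> \<Otimes>\<^sub>M lborel)"
      for i :: int
      using markov_family_measurable_state[OF markov, of "max 0 (of_int i / real (Suc k))"]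
      by measurable
    moreover have "(\<lambda>(\<omega>, s). \<lceil>real (Suc k) * s\<rceil>) \<in> \<Omega> \<Otimes>\<^sub>M lborel \<rightarrow>\<^sub>M count_space UNIV"
      by measurable
    ultimately have "(\<lambda>z. (\<lambda>i (\<omega>, s). X (max 0 (of_int i / real (Suc k))) \<omega>)
        ((\<lambda>(\<omega>, s). \<lceil>real (Suc k) * s\<rceil>) z) z) \<in> borel_measurable (\<Omega> \<Otimes>\<^sub>M lborel)"
      by (rule measurable_compose_countable)
    then show ?thesis
      unfolding q_def by (simp add: case_prod_beta)
  qed
  fix z assume "z \<in> space (\<Omega> \<Otimes>\<^sub>M (lborel :: real measure))"
  then obtain \<omega> s where z: "z = (\<omega>, s)" and \<omega>: "\<omega> \<in> space \<Omega>"
    by (cases z) (simp add: space_pair_measure)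
  have "continuous (at (max 0 s) within {max 0 s..}) (\<lambda>t. X t \<omega>)"
    using markov \<omega> unfolding markov_family_def at_within_Ici_at_right by auto
  moreover have "\<forall>\<^sub>F k in sequentially. q k s \<in> {max 0 s..}"
    unfolding q_def using ceiling_grid_bounds(1)[of s] by (intro always_eventually) (auto intro: max.coboundedI2)
  moreover have "(\<lambda>k. q k s) \<longlonglongrightarrow> max 0 s"
    unfolding q_def by (intro tendsto_intros tendsto_ceiling_grid)
  ultimately have "(\<lambda>k. X (q k s) \<omega>) \<longlonglongrightarrow> X (max 0 s) \<omega>"
    by (rule continuous_within_tendsto_compose)
  then show "(\<lambda>k. (\<lambda>(\<omega>, s). X (q k s) \<omega>) z) \<longlonglongrightarrow> (\<lambda>(\<omega>, s). X (max 0 s) \<omega>) z"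
    by (simp add: z)
qed

lemma markov_family_measurable_path_section:
  fixes X :: "real \<Rightarrow> 'w \<Rightarrow> 'a::metric_space" and g :: "'a \<Rightarrow> real"
  assumes markov: "markov_family \<Omega> F P X" and [measurable]: "g \<in> borel_measurable borel"
    and "\<omega> \<in> space \<Omega>"
  shows "(\<lambda>s. g (X (max 0 s) \<omega>)) \<in> borel_measurable lborel"
proof -
  have [measurable]: "(\<lambda>(\<omega>, s). X (max 0 s) \<omega>) \<in> \<Omega> \<Otimes>\<^sub>M (lborel :: real measure) \<rightarrow>\<^sub>M borel"
    by (rule markov_family_measurable_paths[OF markov])
  have "(\<lambda>(\<omega>, s). g (X (max 0 s) \<omega>)) \<in> borel_measurable (\<Omega> \<Otimes>\<^sub>M (lborel :: real measure))"
    by measurable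
  from measurable_Pair2[OF this \<open>\<omega> \<in> space \<Omega>\<close>] show ?thesis
    by simp
qed

lemma markov_family_measurable_path_integral:
  fixes X :: "real \<Rightarrow> 'w \<Rightarrow> 'a::metric_space" and g :: "'a \<Rightarrow> real"
  assumes markov: "markov_family \<Omega> F P X" and g[measurable]: "g \<in> borel_measurable borel"
    and "0 \<le> a"
  shows "(\<lambda>\<omega>. LBINT s=ereal 0..ereal a. g (X s \<omega>)) \<in> borel_measurable \<Omega>"
proof -
  have [measurable]: "(\<lambda>(\<omega>, s). X (max 0 s) \<omega>) \<in> \<Omega> \<Otimes>\<^sub>M (lborel :: real measure) \<rightarrow>\<^sub>M borel"
    by (rule markov_family_measurable_paths[OF markov])
  have "(LBINT s=ereal 0..ereal a. g (X s \<omega>)) = (\<integral>s. indicator {0<..<a} s * g (X (max 0 s) \<omega>) \<partial>lborel)"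
    for \<omega>
    unfolding interval_lebesgue_integral_le_eq[of "ereal 0" "ereal a", simplified, OF \<open>0 \<le> a\<close>]
      set_lebesgue_integral_def
    by (intro Bochner_Integration.integral_cong) (auto split: split_indicator)
  moreover have "(\<lambda>\<omega>. \<integral>s. indicator {0<..<a} s * g (X (max 0 s) \<omega>) \<partial>lborel) \<in> borel_measurable \<Omega>"
  proof (rule sigma_finite_measure.borel_measurable_lebesgue_integral[OF sigma_finite_lborel])
    have "(\<lambda>z. indicator {0<..<a} (snd z) * (case z of (\<omega>, s) \<Rightarrow> g (X (max 0 s) \<omega>)))
        \<in> borel_measurable (\<Omega> \<Otimes>\<^sub>M (lborel :: real measure))"
      by measurable
    then show "(\<lambda>(\<omega>, s). indicator {0<..<a} s * g (X (max 0 s) \<omega>))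
        \<in> borel_measurable (\<Omega> \<Otimes>\<^sub>M (lborel :: real measure))"
      by (simp add: case_prod_beta)
  qed
  ultimately show ?thesis
    by simp
qed

lemma interval_integrable_bounded:
  fixes g :: "real \<Rightarrow> real"
  assumes "(\<lambda>s. g (max 0 s)) \<in> borel_measurable lborel" and "\<And>s. \<bar>g s\<bar> \<le> C"
    and "0 \<le> a" "a \<le> b"
  shows "interval_lebesgue_integrable lborel (ereal a) (ereal b) g"
proof -
  have "(\<lambda>s. indicator {a<..<b} s *\<^sub>R g s) = (\<lambda>s. indicator {a<..<b} s *\<^sub>R g (max 0 s))"
    using \<open>0 \<le> a\<close> by (auto simp: fun_eq_iff split: split_indicator)
  moreover have "integrable lborel (\<lambda>s. indicator {a<..<b} s *\<^sub>R g (max 0 s))"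
    by (rule integrableI_bounded_set[where A = "{a<..<b}" and B = C])
       (use assms in \<open>auto split: split_indicator\<close>)
  ultimately show ?thesis
    using \<open>a \<le> b\<close> by (simp add: interval_lebesgue_integrable_def set_integrable_def)
qed

lemma interval_integral_le_const:
  fixes g :: "real \<Rightarrow> real"
  assumes "a \<le> b" "interval_lebesgue_integrable lborel (ereal a) (ereal b) g" "\<And>s. g s \<le> c"
  shows "(LBINT s=ereal a..ereal b. g s) \<le> c * (b - a)"
proof -
  have "(LBINT s=ereal a..ereal b. g s) \<le> (LBINT s=ereal a..ereal b. c)"
    unfolding interval_lebesgue_integral_le_eq[of "ereal a" "ereal b", simplified, OF \<open>a \<le> b\<close>]
  proof (rule set_integral_mono)
    show "set_integrable lborel {a<..<b} g"
      using assms(1,2) by (simp add: interval_lebesgue_integrable_def)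
    show "set_integrable lborel {a<..<b} (\<lambda>s. c)"
      using interval_integral_const(1)[of a b c] \<open>a \<le> b\<close>
      by (simp add: interval_lebesgue_integrable_def)
  qed (use assms in auto)
  then show ?thesis
    by simp
qed

lemma interval_integral_split_at_floor:
  fixes g :: "real \<Rightarrow> real"
  assumes meas: "(\<lambda>s. g (max 0 s)) \<in> borel_measurable lborel" and bound: "\<And>s. \<bar>g s\<bar> \<le> K"
    and n: "real n \<le> t" "t \<le> real n + 1"
  shows "(LBINT s=ereal 0..ereal t. g s - d)
    \<le> (LBINT s=ereal 0..ereal (real n). g s) - d * real n + (K + \<bar>d\<bar>)"
proof -
  have bound_d: "\<bar>g s - d\<bar> \<le> K + \<bar>d\<bar>" for s
    using bound[of s] by linarith
  have g_d: "interval_lebesgue_integrable lborel (ereal a) (ereal b) (\<lambda>s. g s - d)"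
    if "0 \<le> a" "a \<le> b" for a b
    using meas bound_d that by (intro interval_integrable_bounded) auto
  have "(LBINT s=ereal 0..ereal t. g s - d)
      = (LBINT s=ereal 0..ereal (real n). g s - d) + (LBINT s=ereal (real n)..ereal t. g s - d)"
    using g_d[of 0 t] n by (intro interval_integral_sum[symmetric]) (simp add: min_def max_def)
  also have "(LBINT s=ereal 0..ereal (real n). g s - d) = (LBINT s=ereal 0..ereal (real n). g s) - d * real n"
    using interval_integrable_bounded[OF meas bound, of 0 "real n"]
    by simp
  also have "(LBINT s=ereal (real n)..ereal t. g s - d) \<le> (K + \<bar>d\<bar>) * (t - real n)"
    using bound_d by (intro interval_integral_le_const g_d n) (auto simp: abs_le_iff)
  also have "\<dots> \<le> K + \<bar>d\<bar>"
    using n bound[of 0] by (intro mult_left_le) auto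
  finally show ?thesis
    by simp
qed

lemma interval_integral_sub_le_excursion:
  fixes g :: "real \<Rightarrow> real" and N :: nat
  assumes meas: "(\<lambda>s. g (max 0 s)) \<in> borel_measurable lborel" and bound: "\<And>s. \<bar>g s\<bar> \<le> K"
    and "0 \<le> t"
  defines "n \<equiv> nat \<lfloor>t\<rfloor>"
  shows "(LBINT s=ereal 0..ereal t. g s - d) \<le> (K + \<bar>d\<bar>) * (real N + 1) +
    (if N \<le> n \<and> d * real n < (LBINT s=ereal 0..ereal (real n). g s) then (K + \<bar>d\<bar>) * real n else 0)"
proof -
  define B where "B = K + \<bar>d\<bar>"
  have "0 \<le> B"
    using bound[of 0] by (simp add: B_def)
  have n: "real n \<le> t" "t \<le> real n + 1"
    using \<open>0 \<le> t\<close> unfolding n_def by linarith+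
  have "(LBINT s=ereal 0..ereal (real n). g s) \<le> K * real n"
    using interval_integral_le_const[of 0 "real n" g K] interval_integrable_bounded[OF meas bound, of 0 "real n"]
      bound abs_le_D1 by auto
  then have excursion: "(LBINT s=ereal 0..ereal (real n). g s) - d * real n \<le> B * real n"
    unfolding B_def using mult_right_mono[OF abs_ge_minus_self[of d], of "real n"]
    by (simp add: distrib_right)
  have "B * real n \<le> B * real N" if "n < N"
    using that \<open>0 \<le> B\<close> by (intro mult_left_mono) auto
  then have "(LBINT s=ereal 0..ereal (real n). g s) - d * real n
      \<le> B * real N + (if N \<le> n \<and> d * real n < (LBINT s=ereal 0..ereal (real n). g s) then B * real n else 0)"
    using excursion \<open>0 \<le> B\<close> by (auto simp: add_increasing intro: order_trans[of _ 0])
  moreover have "(LBINT s=ereal 0..ereal t. g s - d) \<le> (LBINT s=ereal 0..ereal (real n). g s) - d * real n + B"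
    unfolding B_def by (rule interval_integral_split_at_floor[OF meas bound n])
  ultimately show ?thesis
    unfolding B_def[symmetric] by (simp add: algebra_simps)
qed

lemma summable_of_nat_mult_exp_neg:
  assumes "0 < p"
  shows "summable (\<lambda>n. real n * exp (- p * real n))"
proof -
  have "summable (\<lambda>n. diffs (\<lambda>_. 1::real) n * exp (- p) ^ n)"
    by (rule termdiff_converges[of _ 1]) (use assms in \<open>auto intro: summable_geometric\<close>)
  then show ?thesis
    by (rule summable_comparison_test'[of _ 0])
       (auto simp: diffs_def exp_of_nat_mult[symmetric] mult.commute)
qed

lemma nn_integral_indicator_series_finite:
  assumes sets: "\<And>n. E n \<in> sets M"
    and small: "\<And>n. emeasure M (E n) \<le> ennreal (exp (- p * real n))" and "0 < p"
  shows "(\<integral>\<^sup>+\<omega>. (\<Sum>n. ennreal (real n) * indicator (E n) \<omega>) \<partial>M) < \<infinity>"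
proof -
  have "(\<integral>\<^sup>+\<omega>. (\<Sum>n. ennreal (real n) * indicator (E n) \<omega>) \<partial>M) = (\<Sum>n. ennreal (real n) * emeasure M (E n))"
    using sets by (simp add: nn_integral_suminf nn_integral_cmult_indicator)
  also have "\<dots> \<le> (\<Sum>n. ennreal (real n * exp (- p * real n)))"
    using small by (intro suminf_le) (auto simp: ennreal_mult' intro: mult_left_mono)
  also have "\<dots> = ennreal (\<Sum>n. real n * exp (- p * real n))"
    using summable_of_nat_mult_exp_neg[OF \<open>0 < p\<close>] by (intro suminf_ennreal2) auto
  finally show ?thesis
    by (simp add: le_less_trans)
qed

lemma measure_upper_tail_le_measure_deviation:
  fixes A :: "'w \<Rightarrow> real"
  assumes "finite_measure M" and [measurable]: "A \<in> borel_measurable M" and "0 < c"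
  shows "measure M {\<omega>\<in>space M. d * c < A \<omega>} \<le> measure M {\<omega>\<in>space M. d - m < \<bar>1 / c * A \<omega> - m\<bar>}"
proof (rule finite_measure.finite_measure_mono[OF \<open>finite_measure M\<close>])
  show "{\<omega>\<in>space M. d * c < A \<omega>} \<subseteq> {\<omega>\<in>space M. d - m < \<bar>1 / c * A \<omega> - m\<bar>}"
  proof safe
    fix \<omega> assume "d * c < A \<omega>"
    then have "d < 1 / c * A \<omega>"
      using \<open>0 < c\<close> by (simp add: field_simps)
    then show "d - m < \<bar>1 / c * A \<omega> - m\<bar>"
      by linarith
  qed
qed measurable

lemma running_integral_dominated:
  fixes Y :: "real \<Rightarrow> 'w \<Rightarrow> real"
  assumes "finite_measure M"
    and paths: "\<And>\<omega>. \<omega> \<in> space M \<Longrightarrow> (\<lambda>s. Y (max 0 s) \<omega>) \<in> borel_measurable lborel"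
    and integrals: "\<And>n. (\<lambda>\<omega>. LBINT s=ereal 0..ereal (real n). Y s \<omega>) \<in> borel_measurable M"
    and bound: "\<And>s \<omega>. \<bar>Y s \<omega>\<bar> \<le> K"
    and deviation: "\<And>n. N \<le> n \<Longrightarrow>
      measure M {\<omega>\<in>space M. d * real n < (LBINT s=ereal 0..ereal (real n). Y s \<omega>)}
        \<le> exp (- p * real n)"
    and "0 < p"
  obtains h where "(\<integral>\<^sup>+\<omega>. h \<omega> \<partial>M) < \<infinity>"
    and "\<And>\<omega> t. \<omega> \<in> space M \<Longrightarrow> 0 \<le> t \<Longrightarrow> ennreal (LBINT s=ereal 0..ereal t. Y s \<omega> - d) \<le> h \<omega>"
proof
  interpret finite_measure M by fact
  define B where "B = K + \<bar>d\<bar>"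
  have "0 \<le> B"
    using bound[of 0 undefined] by (simp add: B_def)
  define E where "E n = {\<omega>\<in>space M. N \<le> n \<and> d * real n < (LBINT s=ereal 0..ereal (real n). Y s \<omega>)}" for n
  define h where "h \<omega> = ennreal (B * (real N + 1)) + ennreal B * (\<Sum>n. ennreal (real n) * indicator (E n) \<omega>)" for \<omega>
  have E[measurable]: "E n \<in> sets M" for n
    unfolding E_def using integrals[of n] by measurable
  have "emeasure M (E n) \<le> ennreal (exp (- p * real n))" for n
    using deviation[of n] by (cases "N \<le> n") (simp_all add: E_def emeasure_eq_measure)
  then have "(\<integral>\<^sup>+\<omega>. (\<Sum>n. ennreal (real n) * indicator (E n) \<omega>) \<partial>M) < \<infinity>"
    using \<open>0 < p\<close> by (intro nn_integral_indicator_series_finite) auto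
  then show "(\<integral>\<^sup>+\<omega>. h \<omega> \<partial>M) < \<infinity>"
    unfolding h_def
    by (simp add: nn_integral_add nn_integral_cmult ennreal_mult_eq_top_iff less_top[symmetric])
  fix \<omega> and t :: real assume \<omega>: "\<omega> \<in> space M" and "0 \<le> t"
  define n where "n = nat \<lfloor>t\<rfloor>"
  have "(LBINT s=ereal 0..ereal t. Y s \<omega> - d) \<le> B * (real N + 1) + B * real n * indicator (E n) \<omega>"
    using interval_integral_sub_le_excursion[OF paths[OF \<omega>] bound \<open>0 \<le> t\<close>, of d N] \<omega>
    unfolding B_def n_def E_def by (auto simp: indicator_def split: if_splits)
  then have "ennreal (LBINT s=ereal 0..ereal t. Y s \<omega> - d)
      \<le> ennreal (B * (real N + 1) + B * real n * indicator (E n) \<omega>)"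
    by (rule ennreal_leI)
  also have "\<dots> = ennreal (B * (real N + 1)) + ennreal B * (ennreal (real n) * indicator (E n) \<omega>)"
    using \<open>0 \<le> B\<close> by (simp add: ennreal_mult indicator_def)
  also have "\<dots> \<le> h \<omega>"
    unfolding h_def
    using ennreal_suminf_lessD[of "\<lambda>k. ennreal (real k) * indicator (E k) \<omega>" "ennreal (real n) * indicator (E n) \<omega>" n]
    by (intro add_left_mono mult_left_mono) (auto simp: not_less[symmetric])
  finally show "ennreal (LBINT s=ereal 0..ereal t. Y s \<omega> - d) \<le> h \<omega>" .
qed

lemma SUP_Limsup_stopped_integral_less_top:
  fixes Z :: "ereal \<Rightarrow> 'w \<Rightarrow> real" and S :: "('w \<Rightarrow> ereal) set"
  assumes nonneg: "\<And>\<tau> \<omega>. \<tau> \<in> S \<Longrightarrow> \<omega> \<in> space M \<Longrightarrow> 0 \<le> \<tau> \<omega>"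
    and dominated: "\<And>\<omega> t. \<omega> \<in> space M \<Longrightarrow> 0 \<le> t \<Longrightarrow> ennreal (Z (ereal t) \<omega>) \<le> h \<omega>"
    and finite: "(\<integral>\<^sup>+\<omega>. h \<omega> \<partial>M) < \<infinity>"
  shows "(SUP \<tau>\<in>S. Limsup at_top (\<lambda>T::real. ereal (\<integral>\<omega>. Z (min (\<tau> \<omega>) (ereal T)) \<omega> \<partial>M))) < \<infinity>"
proof -
  define C where "C = enn2real (\<integral>\<^sup>+\<omega>. h \<omega> \<partial>M)"
  have C: "(\<integral>\<^sup>+\<omega>. h \<omega> \<partial>M) = ennreal C"
    using finite unfolding C_def by (simp add: less_top)
  have "(\<integral>\<omega>. Z (min (\<tau> \<omega>) (ereal T)) \<omega> \<partial>M) \<le> C" if "\<tau> \<in> S" "0 \<le> T" for \<tau> T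
  proof (rule integral_real_bounded)
    have "ennreal (Z (min (\<tau> \<omega>) (ereal T)) \<omega>) \<le> h \<omega>" if \<omega>: "\<omega> \<in> space M" for \<omega>
    proof -
      have "min (\<tau> \<omega>) (ereal T) = ereal (real_of_ereal (min (\<tau> \<omega>) (ereal T)))"
        using nonneg[OF \<open>\<tau> \<in> S\<close> \<omega>] by (cases "\<tau> \<omega>") (auto simp: min_def)
      moreover have "0 \<le> real_of_ereal (min (\<tau> \<omega>) (ereal T))"
        using nonneg[OF \<open>\<tau> \<in> S\<close> \<omega>] \<open>0 \<le> T\<close> by (simp add: real_of_ereal_pos)
      ultimately show ?thesis
        using dominated[OF \<omega>] by metis
    qed
    then have "(\<integral>\<^sup>+\<omega>. ennreal (Z (min (\<tau> \<omega>) (ereal T)) \<omega>) \<partial>M) \<le> (\<integral>\<^sup>+\<omega>. h \<omega> \<partial>M)"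
      by (rule nn_integral_mono)
    then show "(\<integral>\<^sup>+\<omega>. ennreal (Z (min (\<tau> \<omega>) (ereal T)) \<omega>) \<partial>M) \<le> ennreal C"
      by (simp add: C)
  qed (simp add: C_def)
  then have "Limsup at_top (\<lambda>T::real. ereal (\<integral>\<omega>. Z (min (\<tau> \<omega>) (ereal T)) \<omega> \<partial>M)) \<le> ereal C"
    if "\<tau> \<in> S" for \<tau>
    using that by (intro Limsup_bounded eventually_mono[OF eventually_ge_at_top[of 0]]) simp
  then have "(SUP \<tau>\<in>S. Limsup at_top (\<lambda>T::real. ereal (\<integral>\<omega>. Z (min (\<tau> \<omega>) (ereal T)) \<omega> \<partial>M))) \<le> ereal C"
    by (rule SUP_least)
  then show ?thesis
    using le_less_trans[of _ "ereal C" \<infinity>] by simp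
qed

theorem lemma2p25:
  fixes \<Omega> :: "'w measure" and F :: "real \<Rightarrow> 'w measure"
    and P :: "'a::{metric_space, second_countable_topology} \<Rightarrow> 'w measure"
    and X :: "real \<Rightarrow> 'w \<Rightarrow> 'a" and \<mu> :: "'a measure" and f :: "'a \<Rightarrow> real"
  assumes balls_compact: "\<forall>(x::'a) r. compact (cball x r)"
    and markov: "markov_family \<Omega> F P X"
    and feller: "weak_feller P X"
    and ergodic: "ergodic_with P X \<mu>"
    and f_cont: "continuous_on UNIV f" and f_bdd: "bounded (range f)"
    and mu_neg: "integral\<^sup>L \<mu> f < 0"
    and L: "\<forall>\<delta>>0. \<forall>\<epsilon>>0. \<forall>K. compact K \<longrightarrow>
              (\<exists>N::nat. \<exists>p::real. N > 0 \<and> p > 0 \<and>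
                 (\<forall>n\<ge>N. \<forall>x\<in>K.
                    measure (P x) {\<omega>\<in>space \<Omega>.
                       \<bar>(1 / (real n * \<delta>)) * (LBINT s=ereal 0..ereal (real n * \<delta>). f (X s \<omega>))
                          - integral\<^sup>L \<mu> f\<bar> > \<epsilon>}
                    \<le> exp (- p * real n * \<delta>)))"
  shows "\<forall>x. \<exists>d<0.
           (SUP \<tau>\<in>{\<tau>. stopping_time_on \<Omega> F \<tau>}.
              Limsup at_top (\<lambda>T::real. ereal
                (\<integral>\<omega>. (LBINT s=ereal 0..min (\<tau> \<omega>) (ereal T). f (X s \<omega>) - d) \<partial>P x))) < \<infinity>"
proof (intro allI)
  fix x
  define m where "m = integral\<^sup>L \<mu> f"
  define d where "d = m / 2"
  have "d < 0" "0 < d - m"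
    using mu_neg by (simp_all add: d_def m_def)
  obtain K where K: "\<And>y. \<bar>f y\<bar> \<le> K"
    using f_bdd unfolding bounded_iff by auto
  obtain N :: nat and p where "0 < N" "0 < p" and large_deviation: "\<And>n. N \<le> n \<Longrightarrow>
      measure (P x) {\<omega>\<in>space \<Omega>. d - m < \<bar>1 / real n * (LBINT s=ereal 0..ereal (real n). f (X s \<omega>)) - m\<bar>}
        \<le> exp (- p * real n)"
    using L[rule_format, of 1 "d - m" "{x}"] \<open>0 < d - m\<close> by (auto simp: m_def)
  interpret prob_space "P x"
    using markov unfolding markov_family_def by auto
  have sets_eq: "sets (P x) = sets \<Omega>"
    using markov unfolding markov_family_def by auto
  then have space_eq: "space (P x) = space \<Omega>"
    by (rule sets_eq_imp_space_eq)
  have f_meas: "f \<in> borel_measurable borel"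
    using f_cont by (rule borel_measurable_continuous_onI)
  have integrals: "(\<lambda>\<omega>. LBINT s=ereal 0..ereal (real n). f (X s \<omega>)) \<in> borel_measurable (P x)" for n
    unfolding measurable_cong_sets[OF sets_eq refl]
    by (rule markov_family_measurable_path_integral[OF markov f_meas]) auto
  have deviation: "measure (P x) {\<omega>\<in>space (P x). d * real n < (LBINT s=ereal 0..ereal (real n). f (X s \<omega>))}
      \<le> exp (- p * real n)" if "N \<le> n" for n
    using measure_upper_tail_le_measure_deviation[OF finite_measure_axioms integrals[of n], where c = "real n" and d = d and m = m]
      large_deviation[OF that] \<open>0 < N\<close> that by (simp add: space_eq)
  obtain h where "(\<integral>\<^sup>+\<omega>. h \<omega> \<partial>P x) < \<infinity>" and
    "\<And>\<omega> t. \<omega> \<in> space (P x) \<Longrightarrow> 0 \<le> t \<Longrightarrow> ennreal (LBINT s=ereal 0..ereal t. f (X s \<omega>) - d) \<le> h \<omega>"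
    using running_integral_dominated[OF finite_measure_axioms _ integrals K deviation \<open>0 < p\<close>]
      markov_family_measurable_path_section[OF markov f_meas] unfolding space_eq by blast
  then show "\<exists>d<0. (SUP \<tau>\<in>{\<tau>. stopping_time_on \<Omega> F \<tau>}. Limsup at_top (\<lambda>T::real. ereal
      (\<integral>\<omega>. (LBINT s=ereal 0..min (\<tau> \<omega>) (ereal T). f (X s \<omega>) - d) \<partial>P x))) < \<infinity>"
    using \<open>d < 0\<close> space_eq
    by (intro exI[of _ d] conjI SUP_Limsup_stopped_integral_less_top[where h = h])
       (auto simp: stopping_time_on_def)
qed

end
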